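(* Let $G$ be a linear group (i.e. isomorphic to a subgroup of $GL_n(K)$ for some field $K$ and some $n$). If $G$ is discriminating, then $G$ is abelian.
   Context: A group $G$ is called discriminating if for every integer $N$ and every elements $h_1,\dots,h_N \in G\times G$ there exists a group homomorphism $\rho: G\times G \to G$ such that, for each $i$, $\rho(h_i)=1$ if and only if $h_i=1$. *)

theory Defs
  imports "HOL-Algebra.Algebra" "Jordan_Normal_Form.Matrix"
begin

definition GL :: "'k::field itself \<Rightarrow> nat \<Rightarrow> 'k mat monoid" where
  "GL K n = units_of (ring_mat K n ())"

definition linear_group_over :: "'k::field itself \<Rightarrow> ('g, 'b) monoid_scheme \<Rightarrow> bool" where
  "linear_group_over K G \<longleftrightarrow>
     (\<exists>n::nat. \<exists>f. f \<in> hom G (GL K n) \<and> inj_on f (carrier G))"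

definition discriminating :: "('g, 'b) monoid_scheme \<Rightarrow> bool" where
  "discriminating G \<longleftrightarrow>
     (\<forall>hs :: ('g \<times> 'g) list. set hs \<subseteq> carrier (G \<times>\<times> G) \<longrightarrow>
        (\<exists>\<rho> \<in> hom (G \<times>\<times> G) G.
           \<forall>i < length hs. \<rho> (hs ! i) = \<one>\<^bsub>G\<^esub> \<longleftrightarrow> hs ! i = \<one>\<^bsub>G \<times>\<times> G\<^esub>))"

end

theory Submission
  imports Defs "Jordan_Normal_Form.VS_Connect"
begin

text \<open>If \<open>a\<close> and \<open>b\<close> do not commute, a discriminating group contains, for every \<open>k\<close>,
  elements \<open>u\<^sub>1, \<dots>, u\<^sub>k, v\<^sub>1, \<dots>, v\<^sub>k\<close> such that \<open>u\<^sub>i\<close> commutes with \<open>v\<^sub>j\<close>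
  exactly when \<open>i \<noteq> j\<close>: given such a system of length \<open>k\<close>, the pairs \<open>(u\<^sub>i, 1), (v\<^sub>i, 1)\<close>
  and \<open>(1, a), (1, b)\<close> form one of length \<open>k + 1\<close> in \<open>G \<times> G\<close>, and a homomorphism
  \<open>G \<times> G \<rightarrow> G\<close> that keeps all \<open>k + 1\<close> commutators nontrivial maps it back to \<open>G\<close>.
  In a matrix algebra the \<open>u\<^sub>i\<close> of such a system are linearly independent: applying
  \<open>X \<mapsto> X v\<^sub>j - v\<^sub>j X\<close> to a vanishing combination \<open>\<Sum> c\<^sub>i u\<^sub>i\<close> leaves
  \<open>c\<^sub>j (u\<^sub>j v\<^sub>j - v\<^sub>j u\<^sub>j) = 0\<close>. Hence a subgroup of \<open>GL\<^sub>n\<close> has no such system of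
  length \<open>n\<^sup>2 + 1\<close>.\<close>

definition commutation_system :: "('a, 'b) monoid_scheme \<Rightarrow> nat \<Rightarrow> (nat \<Rightarrow> 'a) \<Rightarrow> (nat \<Rightarrow> 'a) \<Rightarrow> bool"
  where "commutation_system G k u v \<longleftrightarrow>
    (\<forall>i<k. u i \<in> carrier G \<and> v i \<in> carrier G) \<and>
    (\<forall>i<k. \<forall>j<k. u i \<otimes>\<^bsub>G\<^esub> v j = v j \<otimes>\<^bsub>G\<^esub> u i \<longleftrightarrow> i \<noteq> j)"

lemma commutation_system_carrier:
  assumes "commutation_system G k u v" "i < k"
  shows "u i \<in> carrier G" "v i \<in> carrier G"
  using assms unfolding commutation_system_def by blast+

lemma commutation_system_commute_iff:
  assumes "commutation_system G k u v" "i < k" "j < k"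
  shows "u i \<otimes>\<^bsub>G\<^esub> v j = v j \<otimes>\<^bsub>G\<^esub> u i \<longleftrightarrow> i \<noteq> j"
  using assms unfolding commutation_system_def by blast

definition commutator :: "('a, 'b) monoid_scheme \<Rightarrow> 'a \<Rightarrow> 'a \<Rightarrow> 'a"
  where "commutator G x y = x \<otimes>\<^bsub>G\<^esub> y \<otimes>\<^bsub>G\<^esub> inv\<^bsub>G\<^esub> (y \<otimes>\<^bsub>G\<^esub> x)"

lemma (in group) commutator_closed:
  "x \<in> carrier G \<Longrightarrow> y \<in> carrier G \<Longrightarrow> commutator G x y \<in> carrier G"
  by (simp add: commutator_def)

lemma (in group) commutator_eq_one_iff:
  assumes "x \<in> carrier G" "y \<in> carrier G"
  shows "commutator G x y = \<one> \<longleftrightarrow> x \<otimes> y = y \<otimes> x"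
  using assms by (simp add: commutator_def inv_solve_right')

lemma (in group_hom) hom_commutator:
  assumes "x \<in> carrier G" "y \<in> carrier G"
  shows "h (commutator G x y) = commutator H (h x) (h y)"
  using assms by (simp add: commutator_def)

lemma inj_hom_commutation_system:
  assumes "monoid G" "f \<in> hom G H" "inj_on f (carrier G)" "commutation_system G k u v"
  shows "commutation_system H k (f \<circ> u) (f \<circ> v)"
proof -
  have "f (u i) \<otimes>\<^bsub>H\<^esub> f (v j) = f (v j) \<otimes>\<^bsub>H\<^esub> f (u i) \<longleftrightarrow> i \<noteq> j" if "i < k" "j < k" for i j
  proof -
    note uv = commutation_system_carrier(1)[OF assms(4) that(1)]
      commutation_system_carrier(2)[OF assms(4) that(2)]
    have "f (u i) \<otimes>\<^bsub>H\<^esub> f (v j) = f (v j) \<otimes>\<^bsub>H\<^esub> f (u i) \<longleftrightarrow>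
        f (u i \<otimes>\<^bsub>G\<^esub> v j) = f (v j \<otimes>\<^bsub>G\<^esub> u i)"
      using uv by (simp add: hom_mult[OF assms(2)])
    also have "\<dots> \<longleftrightarrow> u i \<otimes>\<^bsub>G\<^esub> v j = v j \<otimes>\<^bsub>G\<^esub> u i"
      using uv by (intro inj_on_eq_iff[OF assms(3)] monoid.m_closed[OF assms(1)])
    finally show ?thesis
      using commutation_system_commute_iff[OF assms(4) that] by simp
  qed
  moreover have "f (u i) \<in> carrier H \<and> f (v i) \<in> carrier H" if "i < k" for i
    using commutation_system_carrier[OF assms(4) that] hom_in_carrier[OF assms(2)] by simp
  ultimately show ?thesis
    unfolding commutation_system_def comp_apply by blast
qed

lemma commutation_system_units_of:
  "commutation_system (units_of R) k u v \<Longrightarrow> commutation_system R k u v"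
  by (auto simp: commutation_system_def units_of_carrier units_of_mult Units_def)

lemma commutation_system_DirProd_Suc:
  assumes "group G" "group H" "commutation_system G k u v"
    and "a \<in> carrier H" "b \<in> carrier H" "a \<otimes>\<^bsub>H\<^esub> b \<noteq> b \<otimes>\<^bsub>H\<^esub> a"
  shows "commutation_system (G \<times>\<times> H) (Suc k)
    (\<lambda>i. if i < k then (u i, \<one>\<^bsub>H\<^esub>) else (\<one>\<^bsub>G\<^esub>, a))
    (\<lambda>i. if i < k then (v i, \<one>\<^bsub>H\<^esub>) else (\<one>\<^bsub>G\<^esub>, b))"
    (is "commutation_system ?P _ ?x ?y")
proof -
  interpret G: group G by fact
  interpret H: group H by fact
  note uv = commutation_system_carrier[OF assms(3)] commutation_system_commute_iff[OF assms(3)]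
  show ?thesis
    unfolding commutation_system_def
  proof (intro conjI allI impI)
    fix i j assume "i < Suc k" "j < Suc k"
    then consider "i < k" "j < k" | "i < k" "j = k" | "i = k" "j < k" | "i = k" "j = k"
      by linarith
    then show "?x i \<otimes>\<^bsub>?P\<^esub> ?y j = ?y j \<otimes>\<^bsub>?P\<^esub> ?x i \<longleftrightarrow> i \<noteq> j"
    proof cases
      case 1
      then show ?thesis using uv by simp
    next
      case 2
      then show ?thesis using uv(1) assms(5) by simp
    next
      case 3
      then show ?thesis using uv(2) assms(4) by simp
    next
      case 4
      then show ?thesis using assms(6) by simp
    qed
  qed (simp_all add: uv(1,2) assms(4,5))
qed

lemma hom_commutation_system:
  assumes "group_hom G H h" "commutation_system G k u v"
    and "\<And>i. i < k \<Longrightarrow> h (commutator G (u i) (v i)) \<noteq> \<one>\<^bsub>H\<^esub>"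
  shows "commutation_system H k (h \<circ> u) (h \<circ> v)"
proof -
  interpret group_hom G H h by fact
  have "h (u i) \<otimes>\<^bsub>H\<^esub> h (v j) = h (v j) \<otimes>\<^bsub>H\<^esub> h (u i) \<longleftrightarrow> i \<noteq> j" if "i < k" "j < k" for i j
  proof (cases "i = j")
    case True
    note uv = commutation_system_carrier[OF assms(2) that(1)]
    then have "commutator H (h (u i)) (h (v i)) \<noteq> \<one>\<^bsub>H\<^esub>"
      using assms(3)[OF that(1)] by (simp add: hom_commutator)
    with True uv show ?thesis
      by (simp add: H.commutator_eq_one_iff)
  next
    case False
    note uv = commutation_system_carrier(1)[OF assms(2) that(1)]
      commutation_system_carrier(2)[OF assms(2) that(2)]
    have "h (u i) \<otimes>\<^bsub>H\<^esub> h (v j) = h (u i \<otimes>\<^bsub>G\<^esub> v j)"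
      using uv by simp
    also have "\<dots> = h (v j \<otimes>\<^bsub>G\<^esub> u i)"
      using commutation_system_commute_iff[OF assms(2) that] False by simp
    also have "\<dots> = h (v j) \<otimes>\<^bsub>H\<^esub> h (u i)"
      using uv by simp
    finally show ?thesis
      using False by simp
  qed
  moreover have "h (u i) \<in> carrier H \<and> h (v i) \<in> carrier H" if "i < k" for i
    using commutation_system_carrier[OF assms(2) that] by simp
  ultimately show ?thesis
    unfolding commutation_system_def comp_apply by blast
qed

lemma (in group) discriminating_commutation_system_Suc:
  assumes "discriminating G" "commutation_system G k u v"
    and "a \<in> carrier G" "b \<in> carrier G" "a \<otimes> b \<noteq> b \<otimes> a"
  obtains u' v' where "commutation_system G (Suc k) u' v'"
proof -
  let ?P = "G \<times>\<times> G"
  interpret P: group ?P by (intro DirProd_group is_group)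
  define x where "x i = (if i < k then (u i, \<one>) else (\<one>, a))" for i
  define y where "y i = (if i < k then (v i, \<one>) else (\<one>, b))" for i
  have xy: "commutation_system ?P (Suc k) x y"
    unfolding x_def y_def using assms by (intro commutation_system_DirProd_Suc is_group)
  note xy_carrier = commutation_system_carrier[OF xy]
  define hs where "hs = map (\<lambda>i. commutator ?P (x i) (y i)) [0..<Suc k]"
  have "set hs \<subseteq> carrier ?P"
    using xy_carrier by (auto simp: hs_def simp del: carrier_DirProd upt_Suc intro!: P.commutator_closed)
  with assms(1) obtain \<rho> where \<rho>: "\<rho> \<in> hom ?P G"
    and discr: "\<forall>i < length hs. \<rho> (hs ! i) = \<one> \<longleftrightarrow> hs ! i = \<one>\<^bsub>?P\<^esub>"
    unfolding discriminating_def by blast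
  have "\<rho> (commutator ?P (x i) (y i)) \<noteq> \<one>" if "i < Suc k" for i
  proof -
    have "commutator ?P (x i) (y i) \<noteq> \<one>\<^bsub>?P\<^esub>"
      using P.commutator_eq_one_iff[OF xy_carrier[OF that]] commutation_system_commute_iff[OF xy that that]
      by blast
    moreover have "i < length hs" "hs ! i = commutator ?P (x i) (y i)"
      using that by (simp_all add: hs_def del: upt_Suc)
    ultimately show ?thesis
      using discr by metis
  qed
  moreover have "group_hom ?P G \<rho>"
    using \<rho> by (intro group_hom.intro group_hom_axioms.intro P.is_group is_group)
  ultimately have "commutation_system G (Suc k) (\<rho> \<circ> x) (\<rho> \<circ> y)"
    using xy by (intro hom_commutation_system)
  then show thesis ..
qed

lemma (in group) discriminating_commutation_system:
  assumes "discriminating G" "a \<in> carrier G" "b \<in> carrier G" "a \<otimes> b \<noteq> b \<otimes> a"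
  shows "\<exists>u v. commutation_system G k u v"
proof (induction k)
  case 0
  show ?case by (simp add: commutation_system_def)
next
  case (Suc k)
  then obtain u v where "commutation_system G k u v"
    by blast
  then obtain u' v' where "commutation_system G (Suc k) u' v'"
    by (rule discriminating_commutation_system_Suc[OF assms(1) _ assms(2-4)])
  then show ?case
    by blast
qed

lemma commutation_system_inj_on:
  assumes "commutation_system G k u v"
  shows "inj_on u {..<k}"
proof (rule inj_onI, rule ccontr)
  fix i j assume "i \<in> {..<k}" "j \<in> {..<k}" "u i = u j" "i \<noteq> j"
  then show False
    using commutation_system_commute_iff[OF assms, of i i] commutation_system_commute_iff[OF assms, of j i]
    by auto
qed

definition vec_of_mat :: "nat \<Rightarrow> 'a mat \<Rightarrow> 'a vec"
  where "vec_of_mat n A = vec (n * n) (\<lambda>i. A $$ (i div n, i mod n))"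

lemma mat_index_less:
  fixes r c n :: nat
  assumes "r < n" "c < n"
  shows "r * n + c < n * n"
proof -
  have "r * n + c < Suc r * n"
    using assms(2) by simp
  also have "\<dots> \<le> n * n"
    using assms(1) by (intro mult_right_mono) auto
  finally show ?thesis .
qed

lemma vec_of_mat_carrier [simp]: "vec_of_mat n A \<in> carrier_vec (n * n)"
  by (simp add: vec_of_mat_def)

lemma index_vec_of_mat:
  assumes "r < n" "c < n"
  shows "vec_of_mat n A $ (r * n + c) = A $$ (r, c)"
  using assms mat_index_less[OF assms] by (simp add: vec_of_mat_def)

lemma inj_on_vec_of_mat: "inj_on (vec_of_mat n) (carrier_mat n n)"
proof (rule inj_onI, rule eq_matI)
  fix A B :: "'a mat" and r c
  assume "A \<in> carrier_mat n n" "B \<in> carrier_mat n n" "vec_of_mat n A = vec_of_mat n B"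
    and "r < dim_row B" "c < dim_col B"
  then show "A $$ (r, c) = B $$ (r, c)"
    by (metis carrier_matD index_vec_of_mat)
qed auto

lemma index_mult_mat_carrier:
  assumes "A \<in> carrier_mat n m" "B \<in> carrier_mat m p" "r < n" "c < p"
  shows "(A * B) $$ (r, c) = (\<Sum>l<m. A $$ (r, l) * B $$ (l, c))"
  using assms by (auto simp: scalar_prod_def lessThan_atLeast0 intro!: sum.cong)

lemma commutation_system_combination_coeff_eq_zero:
  fixes U V :: "nat \<Rightarrow> 'a :: idom mat"
  assumes sys: "commutation_system (ring_mat ty n b) k U V" and "j < k"
    and comb: "\<And>r c. r < n \<Longrightarrow> c < n \<Longrightarrow> (\<Sum>i<k. a i * U i $$ (r, c)) = 0"
  shows "a j = 0"
proof (rule ccontr)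
  assume "a j \<noteq> 0"
  have U: "U i \<in> carrier_mat n n" if "i < k" for i
    using commutation_system_carrier(1)[OF sys that] by (simp add: ring_mat_simps)
  have V: "V j \<in> carrier_mat n n"
    using commutation_system_carrier(2)[OF sys \<open>j < k\<close>] by (simp add: ring_mat_simps)
  have comm: "U i * V j = V j * U i \<longleftrightarrow> i \<noteq> j" if "i < k" for i
    using commutation_system_commute_iff[OF sys that \<open>j < k\<close>] by (simp add: ring_mat_simps)
  then have comm_off: "U i * V j = V j * U i" if "i < k" "i \<noteq> j" for i
    using that by blast
  have entries_eq: "(U j * V j) $$ (r, c) = (V j * U j) $$ (r, c)" if rc: "r < n" "c < n" for r c
  proof -
    have "a j * ((U j * V j) $$ (r, c) - (V j * U j) $$ (r, c))
        = (\<Sum>i<k. a i * ((U i * V j) $$ (r, c) - (V j * U i) $$ (r, c)))"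
      using \<open>j < k\<close> comm_off by (subst sum.remove[of _ j]) (auto intro!: sum.neutral)
    also have "\<dots> = (\<Sum>i<k. a i * (\<Sum>l<n. U i $$ (r, l) * V j $$ (l, c))
        - a i * (\<Sum>l<n. V j $$ (r, l) * U i $$ (l, c)))"
      using index_mult_mat_carrier[OF U V rc] index_mult_mat_carrier[OF V U rc]
      by (intro sum.cong) (simp_all add: right_diff_distrib)
    also have "\<dots> = (\<Sum>i<k. a i * (\<Sum>l<n. U i $$ (r, l) * V j $$ (l, c)))
        - (\<Sum>i<k. a i * (\<Sum>l<n. V j $$ (r, l) * U i $$ (l, c)))"
      by (rule sum_subtractf)
    also have "\<dots> = (\<Sum>l<n. (\<Sum>i<k. a i * U i $$ (r, l)) * V j $$ (l, c))
        - (\<Sum>l<n. V j $$ (r, l) * (\<Sum>i<k. a i * U i $$ (l, c)))"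
      by (simp add: sum_distrib_left sum_distrib_right mult_ac sum.swap[of _ "{..<k}"])
    also have "\<dots> = 0"
      using comb rc by simp
    finally show ?thesis
      using \<open>a j \<noteq> 0\<close> by simp
  qed
  have "U j * V j = V j * U j"
    using U[OF \<open>j < k\<close>] V by (intro eq_matI) (simp_all add: entries_eq del: index_mult_mat(1))
  with comm \<open>j < k\<close> show False
    by simp
qed

lemma commutation_system_ring_mat_length_le:
  fixes U V :: "nat \<Rightarrow> 'a :: field mat"
  assumes sys: "commutation_system (ring_mat ty n b) k U V"
  shows "k \<le> n * n"
proof -
  interpret vs: vec_space "TYPE('a)" "n * n" .
  define S where "S = vec_of_mat n ` U ` {..<k}"
  have "U ` {..<k} \<subseteq> carrier_mat n n"
    using commutation_system_carrier(1)[OF sys] by (auto simp: ring_mat_simps)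
  with commutation_system_inj_on[OF sys] have inj: "inj_on (vec_of_mat n \<circ> U) {..<k}"
    by (intro comp_inj_on inj_on_subset[OF inj_on_vec_of_mat])
  have S_carrier: "S \<subseteq> carrier_vec (n * n)"
    by (auto simp: S_def)
  have "vs.lin_indpt S"
  proof (rule vs.finite_lin_indpt2[OF _ S_carrier])
    fix c assume comb: "vs.lincomb c S = 0\<^sub>v (n * n)"
    show "\<forall>w\<in>S. c w = 0"
    proof
      fix w assume "w \<in> S"
      then obtain j where j: "j < k" "w = vec_of_mat n (U j)"
        by (auto simp: S_def)
      have "(\<Sum>i<k. c (vec_of_mat n (U i)) * U i $$ (r, s)) = 0" if rs: "r < n" "s < n" for r s
      proof -
        have "(\<Sum>i<k. c (vec_of_mat n (U i)) * U i $$ (r, s)) = (\<Sum>w\<in>S. c w * w $ (r * n + s))"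
          unfolding S_def image_comp sum.reindex[OF inj] using rs by (simp add: index_vec_of_mat)
        also have "\<dots> = vs.lincomb c S $ (r * n + s)"
          by (rule vs.lincomb_index[symmetric, OF mat_index_less[OF rs] S_carrier])
        also have "\<dots> = 0"
          using comb mat_index_less[OF rs] by simp
        finally show ?thesis .
      qed
      from commutation_system_combination_coeff_eq_zero[OF sys j(1) this] show "c w = 0"
        using j(2) by simp
    qed
  qed (simp add: S_def)
  then have "card S \<le> n * n"
    using vs.li_le_dim(2)[OF vs.fin_dim S_carrier] vs.dim_is_n by simp
  moreover have "card S = k"
    using card_image[OF inj] by (simp add: S_def image_comp)
  ultimately show ?thesis
    by simp
qed

theorem theorem6p7:
  fixes G :: "('g, 'b) monoid_scheme" and K :: "'k::field itself"
  assumes "group G"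
    and "linear_group_over K G"
    and "discriminating G"
  shows "comm_group G"
proof -
  interpret group G by fact
  obtain n f where f: "f \<in> hom G (GL K n)" "inj_on f (carrier G)"
    using assms(2) unfolding linear_group_over_def by blast
  show ?thesis
  proof (rule group_comm_groupI)
    fix a b assume ab: "a \<in> carrier G" "b \<in> carrier G"
    show "a \<otimes>\<^bsub>G\<^esub> b = b \<otimes>\<^bsub>G\<^esub> a"
    proof (rule ccontr)
      assume "a \<otimes>\<^bsub>G\<^esub> b \<noteq> b \<otimes>\<^bsub>G\<^esub> a"
      then obtain u v where "commutation_system G (n * n + 1) u v"
        using discriminating_commutation_system[OF assms(3) ab] by blast
      then have "commutation_system (GL K n) (n * n + 1) (f \<circ> u) (f \<circ> v)"
        by (rule inj_hom_commutation_system[OF is_monoid f])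
      then have "n * n + 1 \<le> n * n"
        unfolding GL_def by (rule commutation_system_ring_mat_length_le[OF commutation_system_units_of])
      then show False
        by simp
    qed
  qed
qed

end
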